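(* Let $S$ be a MANS-semigroup with $\mathrm{msg}(S)=\{n_1<n_2<\cdots<n_e<n_{e+1}\}$, where $e\geq 2$. Then for every $i\in\{2,\ldots,e\}$, $S'=\langle n_1,n_2,\ldots,n_i\rangle$ is a MANS-semigroup with $\mathrm{e}(S')=i$.
   Context: $\mathbb{N}=\{0,1,2,\ldots\}$. A numerical semigroup is a subset $S\subseteq\mathbb{N}$ closed under addition, containing $0$, with $\mathbb{N}\setminus S$ finite; $\langle A\rangle$ is the submonoid generated by $A$; $\mathrm{msg}(S)$ is the unique finite minimal system of generators and $\mathrm{e}(S)=|\mathrm{msg}(S)|$. $S$ is a MANS-semigroup if $w(1)<\cdots<w(\mathrm{m}(S)-1)$, where $\mathrm{m}(S)$ is the least element of $S\setminus\{0\}$ and $w(i)$ the least element of $S$ congruent to $i$ modulo $\mathrm{m}(S)$. *)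

theory Defs
  imports Main
begin

definition numerical_semigroup :: "nat set \<Rightarrow> bool" where
  "numerical_semigroup S \<longleftrightarrow> 0 \<in> S \<and> (\<forall>x\<in>S. \<forall>y\<in>S. x + y \<in> S) \<and> finite (UNIV - S)"

inductive_set gen :: "nat set \<Rightarrow> nat set" for A :: "nat set" where
  gen_zero: "0 \<in> gen A"
| gen_add: "a \<in> A \<Longrightarrow> x \<in> gen A \<Longrightarrow> a + x \<in> gen A"

definition is_msg :: "nat set \<Rightarrow> nat set \<Rightarrow> bool" where
  "is_msg A S \<longleftrightarrow> gen A = S \<and> (\<forall>B. B \<subset> A \<longrightarrow> gen B \<noteq> S)"

definition msg :: "nat set \<Rightarrow> nat set" where
  "msg S = (THE A. is_msg A S)"

definition embdim :: "nat set \<Rightarrow> nat" where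
  "embdim S = card (msg S)"

definition multiplicity :: "nat set \<Rightarrow> nat" where
  "multiplicity S = (LEAST x. x \<in> S \<and> x \<noteq> 0)"

definition apery_w :: "nat set \<Rightarrow> nat \<Rightarrow> nat" where
  "apery_w S i = (LEAST x. x \<in> S \<and> x mod multiplicity S = i)"

definition MANS :: "nat set \<Rightarrow> bool" where
  "MANS S \<longleftrightarrow> numerical_semigroup S \<and>
     (\<forall>i j. 1 \<le> i \<longrightarrow> i < j \<longrightarrow> j < multiplicity S \<longrightarrow> apery_w S i < apery_w S j)"

end

theory Submission
  imports Defs
begin

text \<open>Let \<open>m = n\<^sub>1\<close> be the multiplicity of \<open>S\<close>. Because the Apery elements \<open>w(r)\<close>
  increase with \<open>r\<close>, every element \<open>g\<close> of \<open>S\<close> that is not a multiple of \<open>m\<close> has an element of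
  \<open>S\<close> below it in the preceding residue class, namely \<open>w(r - 1) < w(r) \<le> g\<close> for \<open>r = g mod m\<close>
  (or \<open>0\<close> if \<open>r = 1\<close>). All elements of \<open>S\<close> below \<open>n\<^sub>2\<close> are multiples of \<open>m\<close>, so this forces
  \<open>n\<^sub>2 \<equiv> 1 (mod m)\<close>; hence \<open>T = \<langle>n\<^sub>1, \<dots>, n\<^sub>i\<rangle>\<close> is a numerical semigroup of multiplicity \<open>m\<close>.
  To compare Apery elements of \<open>T\<close>, write \<open>w\<^sub>T(k + 1) = g + x\<close> with \<open>g\<close> a generator and
  \<open>x \<in> T\<close>: the element of \<open>S\<close> just below \<open>g\<close> in the preceding class is smaller than \<open>n\<^bsub>i+1\<^esub>\<close>,
  so it lies in \<open>T\<close>, and adding \<open>x\<close> to it gives an element of \<open>T\<close> in class \<open>k\<close> smaller than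
  \<open>w\<^sub>T(k + 1)\<close>. Finally the \<open>n\<^sub>j\<close> with \<open>j \<le> i\<close>, being atoms of \<open>S\<close>, remain atoms of \<open>T\<close>.\<close>

lemma gen_base: "a \<in> A \<Longrightarrow> a \<in> gen A"
  using gen.gen_add[of a A 0] gen.gen_zero by simp

lemma gen_add_closed: "x \<in> gen A \<Longrightarrow> y \<in> gen A \<Longrightarrow> x + y \<in> gen A"
  by (induction x rule: gen.induct) (auto simp: add.assoc intro: gen.gen_add)

lemma gen_mult: "a \<in> A \<Longrightarrow> k * a \<in> gen A"
  by (induction k) (auto intro: gen.gen_zero gen_add_closed gen_base)

lemma gen_restrict:
  assumes "x \<in> gen B" "x < c" "\<And>b. b \<in> B \<Longrightarrow> b < c \<Longrightarrow> b \<in> A"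
  shows "x \<in> gen A"
  using assms by (induction x rule: gen.induct) (auto intro: gen.intros)

lemma gen_image_below:
  fixes n :: "nat \<Rightarrow> nat"
  assumes "strict_mono_on {1..N} n" "j < N" "z \<in> gen (n ` {1..N})" "z < n (Suc j)"
  shows "z \<in> gen (n ` {1..j})"
proof (rule gen_restrict[OF assms(3,4)])
  fix b assume "b \<in> n ` {1..N}" "b < n (Suc j)"
  then obtain k where k: "k \<in> {1..N}" "b = n k" by auto
  then have "k \<le> j"
    using strict_mono_on_leD[OF assms(1), of "Suc j" k] assms(2) \<open>b < n (Suc j)\<close>
    by (cases "k \<le> j") auto
  then show "b \<in> n ` {1..j}" using k by auto
qed

lemma gen_singleton_dvd: "x \<in> gen {a} \<Longrightarrow> a dvd x"
  by (induction x rule: gen.induct) auto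

lemma gen_nonzero_ge:
  assumes "y \<in> gen B" "y \<noteq> 0"
  shows "\<exists>b\<in>B. b \<le> y"
  using assms by (cases rule: gen.cases) (auto intro: le_add1)

definition add_submonoid :: "nat set \<Rightarrow> bool" where
  "add_submonoid S \<longleftrightarrow> 0 \<in> S \<and> (\<forall>x\<in>S. \<forall>y\<in>S. x + y \<in> S)"

lemma numerical_semigroup_imp_add_submonoid:
  "numerical_semigroup S \<Longrightarrow> add_submonoid S"
  by (simp add: numerical_semigroup_def add_submonoid_def)

lemma MANS_imp_add_submonoid: "MANS S \<Longrightarrow> add_submonoid S"
  by (simp add: MANS_def numerical_semigroup_imp_add_submonoid)

lemma add_submonoid_gen: "add_submonoid (gen A)"
  by (auto simp: add_submonoid_def intro: gen.gen_zero gen_add_closed)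

lemma gen_least:
  assumes "add_submonoid S" "A \<subseteq> S"
  shows "gen A \<subseteq> S"
proof
  fix x assume "x \<in> gen A"
  then show "x \<in> S"
    using assms by (induction x rule: gen.induct) (auto simp: add_submonoid_def)
qed

definition atoms :: "nat set \<Rightarrow> nat set" where
  "atoms S = {x \<in> S. x \<noteq> 0 \<and> (\<forall>s\<in>S. \<forall>t\<in>S. x = s + t \<longrightarrow> s = 0 \<or> t = 0)}"

lemma gen_atoms:
  assumes "add_submonoid S"
  shows "gen (atoms S) = S"
proof
  show "gen (atoms S) \<subseteq> S"
    using gen_least[OF assms] by (auto simp: atoms_def)
  show "S \<subseteq> gen (atoms S)"
  proof
    fix x assume "x \<in> S"
    then show "x \<in> gen (atoms S)"
    proof (induction x rule: less_induct)
      case (less x)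
      show ?case
      proof (cases "x = 0 \<or> x \<in> atoms S")
        case True
        then show ?thesis by (auto intro: gen.gen_zero gen_base)
      next
        case False
        then obtain s t where "s \<in> S" "t \<in> S" "s \<noteq> 0" "t \<noteq> 0" "x = s + t"
          using less.prems by (auto simp: atoms_def)
        then show ?thesis using less.IH[of s] less.IH[of t] by (auto intro: gen_add_closed)
      qed
    qed
  qed
qed

lemma atoms_subset_generators:
  assumes "gen A = S"
  shows "atoms S \<subseteq> A"
proof
  fix x assume "x \<in> atoms S"
  moreover have "x \<in> gen A \<Longrightarrow> x \<in> atoms S \<Longrightarrow> x \<in> A"
  proof (induction x rule: gen.induct)
    case (gen_add a y)
    have "a \<in> S" "y \<in> S" using gen_add.hyps assms gen_base by auto
    then have "a = 0 \<or> y = 0" using gen_add.prems by (auto simp: atoms_def)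
    then show ?case using gen_add by auto
  qed (simp add: atoms_def)
  ultimately show "x \<in> A" using assms by (auto simp: atoms_def)
qed

lemma msg_eq_atoms:
  assumes "add_submonoid S"
  shows "msg S = atoms S"
  unfolding msg_def
proof (rule the_equality)
  show "is_msg (atoms S) S"
    using gen_atoms[OF assms] atoms_subset_generators by (auto simp: is_msg_def)
  show "A = atoms S" if "is_msg A S" for A
    using that gen_atoms[OF assms] atoms_subset_generators[of A S] by (auto simp: is_msg_def)
qed

lemma gen_msg: "add_submonoid S \<Longrightarrow> gen (msg S) = S"
  by (simp add: gen_atoms msg_eq_atoms)

lemma zero_notin_msg: "add_submonoid S \<Longrightarrow> 0 \<notin> msg S"
  by (simp add: msg_eq_atoms atoms_def)

lemma atoms_gen:
  assumes "add_submonoid S" "A \<subseteq> atoms S"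
  shows "atoms (gen A) = A"
proof
  show "atoms (gen A) \<subseteq> A" by (rule atoms_subset_generators) simp
  have "gen A \<subseteq> S" using gen_least[OF assms(1)] assms(2) by (auto simp: atoms_def)
  then show "A \<subseteq> atoms (gen A)"
    using assms(2) gen_base[of _ A] unfolding atoms_def by blast
qed

lemma atom_not_dvd:
  assumes "add_submonoid S" "a \<in> atoms S" "m \<in> S" "0 < m" "m < a"
  shows "\<not> m dvd a"
proof
  assume "m dvd a"
  then obtain q where "a = m * q" ..
  then have "a - m = (q - 1) * m" by (simp add: diff_mult_distrib2 mult.commute)
  then have "a - m \<in> S"
    using gen_least[OF assms(1), of "{m}"] gen_mult[of m "{m}" "q - 1"] assms(3) by auto
  moreover have "\<forall>s\<in>S. \<forall>t\<in>S. a = s + t \<longrightarrow> s = 0 \<or> t = 0"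
    using assms(2) by (simp add: atoms_def)
  ultimately have "m = 0 \<or> a - m = 0" using assms(3,5) by (metis le_add_diff_inverse less_imp_le)
  then show False using assms(4,5) by simp
qed

lemma multiplicity_gen:
  assumes "0 \<notin> A" "a \<in> A" "\<And>b. b \<in> A \<Longrightarrow> a \<le> b"
  shows "multiplicity (gen A) = a"
  unfolding multiplicity_def
proof (rule Least_equality)
  show "a \<in> gen A \<and> a \<noteq> 0" using assms(1,2) by (metis gen_base)
  show "a \<le> y" if "y \<in> gen A \<and> y \<noteq> 0" for y
    using that gen_nonzero_ge[of y A] assms(3) le_trans by blast
qed

lemma multiplicity_gen_image:
  fixes n :: "nat \<Rightarrow> nat"
  assumes "strict_mono_on {1..N} n" "1 \<le> j" "j \<le> N" "0 \<notin> n ` {1..j}"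
  shows "multiplicity (gen (n ` {1..j})) = n 1"
  by (rule multiplicity_gen) (use assms strict_mono_on_leD[OF assms(1)] in auto)

lemma numerical_semigroup_residue:
  assumes "numerical_semigroup S" "r < m"
  shows "\<exists>x\<in>S. x mod m = r"
proof -
  obtain K where K: "\<forall>x\<in>UNIV - S. x < K"
    using assms(1) by (auto simp: numerical_semigroup_def finite_nat_set_iff_bounded)
  have "K \<le> r + m * K" using assms(2) by (cases m) auto
  then have "r + m * K \<in> S" using K by (meson DiffI UNIV_I not_le)
  moreover have "(r + m * K) mod m = r" using assms(2) by simp
  ultimately show ?thesis by blast
qed

lemma multiplicity_pos:
  assumes "numerical_semigroup S"
  shows "0 < multiplicity S"
proof -
  obtain x where "x \<in> S" "x mod 2 = 1"
    using numerical_semigroup_residue[OF assms, of 1 2] by auto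
  then have "x \<in> S \<and> x \<noteq> 0" by auto
  then have "multiplicity S \<in> S \<and> multiplicity S \<noteq> 0"
    unfolding multiplicity_def by (rule LeastI)
  then show ?thesis by simp
qed

lemma apery_w_mem_mod:
  assumes "numerical_semigroup S" "r < multiplicity S"
  shows "apery_w S r \<in> S" "apery_w S r mod multiplicity S = r"
  using LeastI_ex[OF numerical_semigroup_residue[OF assms, unfolded Bex_def]]
  by (simp_all add: apery_w_def)

lemma apery_w_le: "y \<in> S \<Longrightarrow> y mod multiplicity S = r \<Longrightarrow> apery_w S r \<le> y"
  unfolding apery_w_def by (simp add: Least_le)

lemma MANS_intro:
  assumes "numerical_semigroup S"
    and step: "\<And>k. 1 \<le> k \<Longrightarrow> Suc k < multiplicity S \<Longrightarrow> apery_w S k < apery_w S (Suc k)"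
  shows "MANS S"
proof -
  have "1 \<le> i \<longrightarrow> j < multiplicity S \<longrightarrow> apery_w S i < apery_w S j" if "i < j" for i j
    using that by (induction rule: less_Suc_induct) (use step in \<open>auto dest: less_trans\<close>)
  then show ?thesis using assms(1) by (simp add: MANS_def)
qed

lemma MANS_predecessor_class:
  assumes "MANS S" "g \<in> S" "\<not> multiplicity S dvd g"
  obtains z where "z \<in> S" "z < g" "Suc z mod multiplicity S = g mod multiplicity S"
proof -
  let ?m = "multiplicity S" and ?r = "g mod multiplicity S"
  have ns: "numerical_semigroup S" using assms(1) by (simp add: MANS_def)
  have r: "0 < ?r" "?r < ?m"
    using assms(3) multiplicity_pos[OF ns] by (auto simp: dvd_eq_mod_eq_0)
  show ?thesis
  proof (cases "?r = 1")
    case True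
    then show ?thesis using that[of 0] ns r assms(3) by (auto simp: numerical_semigroup_def)
  next
    case False
    let ?z = "apery_w S (?r - 1)"
    have "?z < apery_w S ?r"
      using assms(1) r False by (simp add: MANS_def)
    also have "\<dots> \<le> g" using apery_w_le assms(2) by blast
    finally have "?z < g" .
    moreover have "?z \<in> S" "?z mod ?m = ?r - 1"
      using apery_w_mem_mod[OF ns, of "?r - 1"] r by auto
    moreover have "Suc (?r - 1) mod ?m = ?r" using r by simp
    ultimately show ?thesis using that[of ?z] by (metis mod_Suc_eq)
  qed
qed

lemma MANS_least_non_multiple:
  assumes "MANS S" "x \<in> S" "\<not> multiplicity S dvd x"
    and below: "\<And>y. y \<in> S \<Longrightarrow> y < x \<Longrightarrow> multiplicity S dvd y"
  shows "x mod multiplicity S = 1"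
proof -
  let ?m = "multiplicity S"
  obtain z where "z \<in> S" "z < x" "Suc z mod ?m = x mod ?m"
    using MANS_predecessor_class[OF assms(1-3)] .
  moreover have "z mod ?m = 0" using below calculation by simp
  ultimately have "x mod ?m = 1 mod ?m" by (metis mod_Suc_eq One_nat_def)
  moreover have "?m \<noteq> 1" using assms(3) by auto
  ultimately show ?thesis by simp
qed

lemma numerical_semigroup_gen:
  assumes "a \<in> A" "b \<in> A" "b mod a = 1"
  shows "numerical_semigroup (gen A)"
proof -
  have "x \<in> gen A" if x: "(a - 1) * b \<le> x" for x
  proof -
    let ?r = "x mod a"
    have rb: "?r * b \<le> x"
    proof (cases "a = 0")
      case True
      then show ?thesis using assms(3) by simp
    next
      case False
      then have "?r \<le> a - 1" by (simp add: less_Suc_eq_le[symmetric])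
      then show ?thesis using x mult_le_mono1 le_trans by blast
    qed
    have "(?r * b) mod a = ?r"
      by (simp add: mod_mult_right_eq[symmetric] assms(3))
    then have "x mod a = (?r * b) mod a" by simp
    then have "a dvd x - ?r * b" using mod_eq_dvd_iff_nat[OF rb] by blast
    then obtain k where "x - ?r * b = a * k" ..
    then have "x = ?r * b + k * a" using rb by (simp add: mult.commute)
    then show ?thesis using gen_mult assms(1,2) gen_add_closed by metis
  qed
  then have "UNIV - gen A \<subseteq> {..<(a - 1) * b}" by (auto simp: not_le[symmetric])
  then show ?thesis
    using add_submonoid_gen[of A] finite_subset
    by (auto simp: numerical_semigroup_def add_submonoid_def)
qed

lemma MANS_gen:
  assumes "MANS S" "numerical_semigroup (gen A)" "A \<subseteq> S" "0 \<notin> A"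
    and mult: "multiplicity (gen A) = multiplicity S"
    and below: "\<And>g z. g \<in> A \<Longrightarrow> z \<in> S \<Longrightarrow> z < g \<Longrightarrow> z \<in> gen A"
  shows "MANS (gen A)"
proof (rule MANS_intro[OF assms(2)])
  let ?m = "multiplicity S"
  fix k assume k: "1 \<le> k" "Suc k < multiplicity (gen A)"
  define x where "x = apery_w (gen A) (Suc k)"
  have "x \<in> gen A" and x_mod: "x mod ?m = Suc k"
    using apery_w_mem_mod[OF assms(2) k(2)] mult by (simp_all add: x_def)
  then obtain g x' where x: "x = g + x'" "g \<in> A" "x' \<in> gen A"
    by (cases rule: gen.cases) auto
  have "\<not> ?m dvd g"
  proof
    assume "?m dvd g"
    then have "x' mod ?m = Suc k" using x_mod x(1) by (metis dvd_imp_mod_0 mod_add_left_eq add_0)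
    then have "x \<le> x'" using apery_w_le[of x' "gen A"] x(3) mult x_def by simp
    then show False using x(1,2) assms(4) by auto
  qed
  then obtain z where z: "z \<in> S" "z < g" "Suc z mod ?m = g mod ?m"
    using MANS_predecessor_class[OF assms(1)] x(2) assms(3) by blast
  let ?y = "z + x'"
  have "Suc ?y mod ?m = (Suc z mod ?m + x') mod ?m" by (simp add: mod_add_left_eq)
  also have "\<dots> = x mod ?m" using z(3) x(1) by (simp add: mod_add_left_eq)
  finally have "?y mod ?m = k" using x_mod k(2) mult by (simp add: mod_Suc split: if_splits)
  moreover have "?y \<in> gen A" using below[OF x(2) z(1,2)] x(3) gen_add_closed by blast
  ultimately have "apery_w (gen A) k \<le> ?y" using apery_w_le mult by metis
  also have "?y < x" using x(1) z(2) by simp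
  finally show "apery_w (gen A) k < apery_w (gen A) (Suc k)" by (simp add: x_def)
qed

lemma MANS_msg_second_mod:
  fixes n :: "nat \<Rightarrow> nat"
  assumes "MANS S" "strict_mono_on {1..N} n" "msg S = n ` {1..N}" "2 \<le> N"
  shows "n 2 mod n 1 = 1"
proof -
  have sub: "add_submonoid S" using assms(1) by (rule MANS_imp_add_submonoid)
  have S: "gen (n ` {1..N}) = S" and zero: "0 \<notin> n ` {1..N}"
    using gen_msg[OF sub] zero_notin_msg[OF sub] assms(3) by auto
  have mult: "multiplicity S = n 1"
    using multiplicity_gen_image[OF assms(2), of N] zero S assms(4) by simp
  have "n 1 \<in> S" "n 2 \<in> S" "0 < n 1" using S zero gen_base assms(4) by auto
  show ?thesis
  proof (rule MANS_least_non_multiple[OF assms(1) \<open>n 2 \<in> S\<close>, unfolded mult])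
    have "n 1 < n 2" using strict_mono_onD[OF assms(2)] assms(4) by auto
    moreover have "n 2 \<in> atoms S" using assms(3,4) msg_eq_atoms[OF sub] by auto
    ultimately show "\<not> n 1 dvd n 2" using atom_not_dvd[OF sub] \<open>n 1 \<in> S\<close> \<open>0 < n 1\<close> by blast
    show "n 1 dvd y" if "y \<in> S" "y < n 2" for y
      using gen_image_below[OF assms(2), of 1 y] gen_singleton_dvd that S assms(4)
      by (auto simp: numeral_2_eq_2)
  qed
qed

lemma MANS_gen_msg_prefix:
  fixes n :: "nat \<Rightarrow> nat"
  assumes "MANS S" "strict_mono_on {1..N} n" "msg S = n ` {1..N}" "2 \<le> i" "i < N"
  shows "MANS (gen (n ` {1..i}))"
proof -
  have sub: "add_submonoid S" using assms(1) by (rule MANS_imp_add_submonoid)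
  have S: "gen (n ` {1..N}) = S" and zero: "0 \<notin> n ` {1..N}"
    using gen_msg[OF sub] zero_notin_msg[OF sub] assms(3) by auto
  have A: "n ` {1..i} \<subseteq> S" "0 \<notin> n ` {1..i}" using S zero gen_base assms(5) by auto
  have "multiplicity (gen (n ` {1..i})) = n 1"
    using multiplicity_gen_image[OF assms(2), of i] A(2) assms(4,5) by simp
  moreover have "multiplicity S = n 1"
    using multiplicity_gen_image[OF assms(2), of N] zero S assms(4,5) by simp
  moreover have "numerical_semigroup (gen (n ` {1..i}))"
    using numerical_semigroup_gen[of "n 1" _ "n 2"] MANS_msg_second_mod[OF assms(1-3)] assms(4,5)
    by simp
  moreover have "z \<in> gen (n ` {1..i})" if "g \<in> n ` {1..i}" "z \<in> S" "z < g" for g z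
  proof -
    have "g < n (Suc i)" using that(1) strict_mono_onD[OF assms(2)] assms(5) by auto
    then show ?thesis using gen_image_below[OF assms(2,5)] S that(2,3) by simp
  qed
  ultimately show ?thesis using MANS_gen[OF assms(1)] A by simp
qed

lemma embdim_gen_msg_prefix:
  fixes n :: "nat \<Rightarrow> nat"
  assumes "add_submonoid S" "strict_mono_on {1..N} n" "msg S = n ` {1..N}" "i \<le> N"
  shows "embdim (gen (n ` {1..i})) = i"
proof -
  have "n ` {1..i} \<subseteq> atoms S" using assms(3,4) msg_eq_atoms[OF assms(1)] by auto
  then have "msg (gen (n ` {1..i})) = n ` {1..i}"
    using msg_eq_atoms[OF add_submonoid_gen] atoms_gen[OF assms(1)] by simp
  moreover have "inj_on n {1..i}"
    using strict_mono_on_imp_inj_on[OF assms(2)] assms(4) inj_on_subset by fastforce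
  ultimately show ?thesis by (simp add: embdim_def card_image)
qed

theorem corollary4p3:
  fixes S :: "nat set" and n :: "nat \<Rightarrow> nat" and e :: nat
  assumes "MANS S"
    and "e \<ge> 2"
    and "strict_mono_on {1..e+1} n"
    and "msg S = n ` {1..e+1}"
  shows "\<forall>i\<in>{2..e}. MANS (gen (n ` {1..i})) \<and> embdim (gen (n ` {1..i})) = i"
  using MANS_gen_msg_prefix[OF assms(1,3,4)]
    embdim_gen_msg_prefix[OF MANS_imp_add_submonoid[OF assms(1)] assms(3,4)]
  by auto

end
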